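(* Let $Y$ be a regular space with $G_\delta$ points such that for every Suslin tree $T$ and every continuous $f:T\to Y$ there is $y\in Y$ with $f^{-1}(\{y\})$ uncountable. Then $\mathsf{S}(T,Y)$ holds for every Suslin tree $T$.
   Context: All spaces are Hausdorff and maps continuous. A tree is a partially ordered set in which the predecessors of each point are well ordered; trees are Hausdorff (two points at a limit level with the same predecessors coincide) and carry the interval topology (base: $\{z:x<z\le y\}$ for $x<y$ and singletons of minimal elements). A Suslin tree is a tree of height $\omega_1$ all of whose chains and antichains are countable. For a non-Lindelöf space $X$ and a space $Y$, $\mathsf{S}(X,Y)$ means: for every continuous $f:X\to Y$ there are a Lindelöf $Z\subset X$ and a retraction $r:X\to Z$ with $f\circ r=f$. *)

theory Defs
  imports "HOL-Analysis.Analysis"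
begin

definition tree_pred :: "'a set \<Rightarrow> ('a \<Rightarrow> 'a \<Rightarrow> bool) \<Rightarrow> 'a \<Rightarrow> 'a set" where
  "tree_pred A lt x = {y \<in> A. lt y x}"

text \<open>The (reflexive) order restricted to the predecessors of x; its order type is the height of x.\<close>
definition pred_order :: "'a set \<Rightarrow> ('a \<Rightarrow> 'a \<Rightarrow> bool) \<Rightarrow> 'a \<Rightarrow> 'a rel" where
  "pred_order A lt x = {(a, b). a \<in> tree_pred A lt x \<and> b \<in> tree_pred A lt x \<and> (a = b \<or> lt a b)}"

text \<open>Partial order whose predecessor sets are well ordered, plus the Hausdorff condition:
  two points at a limit level (predecessor set nonempty without maximum) with the
  same predecessors coincide.\<close>
definition is_tree :: "'a set \<Rightarrow> ('a \<Rightarrow> 'a \<Rightarrow> bool) \<Rightarrow> bool" where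
  "is_tree A lt \<longleftrightarrow>
     (\<forall>x y. lt x y \<longrightarrow> x \<in> A \<and> y \<in> A) \<and>
     (\<forall>x\<in>A. \<not> lt x x) \<and>
     (\<forall>x\<in>A. \<forall>y\<in>A. \<forall>z\<in>A. lt x y \<and> lt y z \<longrightarrow> lt x z) \<and>
     (\<forall>x\<in>A. Well_order (pred_order A lt x)) \<and>
     (\<forall>x\<in>A. \<forall>y\<in>A. tree_pred A lt x = tree_pred A lt y \<and> tree_pred A lt x \<noteq> {} \<and>
        \<not> (\<exists>m\<in>tree_pred A lt x. \<forall>z\<in>tree_pred A lt x. z = m \<or> lt z m) \<longrightarrow> x = y)"

definition tree_base :: "'a set \<Rightarrow> ('a \<Rightarrow> 'a \<Rightarrow> bool) \<Rightarrow> 'a set set" where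
  "tree_base A lt =
     {{z \<in> A. lt x z \<and> (z = y \<or> lt z y)} | x y. x \<in> A \<and> y \<in> A \<and> lt x y} \<union>
     {{x} | x. x \<in> A \<and> (\<forall>y\<in>A. \<not> lt y x)}"

definition tree_topology :: "'a set \<Rightarrow> ('a \<Rightarrow> 'a \<Rightarrow> bool) \<Rightarrow> 'a topology" where
  "tree_topology A lt = topology_generated_by (tree_base A lt)"

definition tree_chain :: "'a set \<Rightarrow> ('a \<Rightarrow> 'a \<Rightarrow> bool) \<Rightarrow> 'a set \<Rightarrow> bool" where
  "tree_chain A lt C \<longleftrightarrow> C \<subseteq> A \<and> (\<forall>x\<in>C. \<forall>y\<in>C. x = y \<or> lt x y \<or> lt y x)"

definition tree_antichain :: "'a set \<Rightarrow> ('a \<Rightarrow> 'a \<Rightarrow> bool) \<Rightarrow> 'a set \<Rightarrow> bool" where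
  "tree_antichain A lt C \<longleftrightarrow> C \<subseteq> A \<and> (\<forall>x\<in>C. \<forall>y\<in>C. x \<noteq> y \<longrightarrow> \<not> lt x y \<and> \<not> lt y x)"

text \<open>Height omega_1: every node has height < omega_1 (countably many predecessors),
  and every countable ordinal (represented as a well-order on a subset of nat) is the
  height of some node.\<close>
definition height_omega1 :: "'a set \<Rightarrow> ('a \<Rightarrow> 'a \<Rightarrow> bool) \<Rightarrow> bool" where
  "height_omega1 A lt \<longleftrightarrow>
     (\<forall>x\<in>A. countable (tree_pred A lt x)) \<and>
     (\<forall>r :: nat rel. Well_order r \<longrightarrow> (\<exists>x\<in>A. (pred_order A lt x, r) \<in> ordIso))"

definition suslin_tree :: "'a set \<Rightarrow> ('a \<Rightarrow> 'a \<Rightarrow> bool) \<Rightarrow> bool" where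
  "suslin_tree A lt \<longleftrightarrow> is_tree A lt \<and> height_omega1 A lt \<and>
     (\<forall>C. tree_chain A lt C \<longrightarrow> countable C) \<and>
     (\<forall>C. tree_antichain A lt C \<longrightarrow> countable C)"

definition S_prop :: "'a topology \<Rightarrow> 'b topology \<Rightarrow> bool" where
  "S_prop X Y \<longleftrightarrow>
     (\<forall>f. continuous_map X Y f \<longrightarrow>
        (\<exists>Z r. Z \<subseteq> topspace X \<and> Lindelof_space (subtopology X Z) \<and>
               continuous_map X (subtopology X Z) r \<and> (\<forall>x\<in>Z. r x = x) \<and>
               (\<forall>x\<in>topspace X. f (r x) = f x)))"

end

(*
  Let f be continuous on the Suslin tree T and let C be the set of nodes above which f is
  constant. C is upward closed, so sending each node of C to the least node of C below it and
  fixing T - C is a continuous retraction r with f o r = f onto (T - C) together with the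
  minimal nodes of C. The minimal nodes form an antichain, so it remains to see that T - C is
  countable. It is downward closed; were it uncountable, it would be a Suslin tree, and by
  hypothesis f would have an uncountable fibre over some y on it. Write {y} as a countable
  intersection of open sets V. A node u of that fibre lies below a first exit of f from V
  after a visit to y. Continuity at limit nodes and closedness of {y} show that every node
  has only finitely many first exits below it, so sorting them by that number splits them
  into countably many antichains; as nodes have countably many predecessors, the fibre is
  countable after all.
*)

theory Submission
  imports Defs
begin

lemma tree_lt_memD:
  assumes "is_tree A lt" "lt x y" shows "x \<in> A" "y \<in> A"
  using assms unfolding is_tree_def by blast+

lemma tree_irrefl: "is_tree A lt \<Longrightarrow> \<not> lt x x"
  unfolding is_tree_def by blast

lemma tree_trans: "is_tree A lt \<Longrightarrow> lt x y \<Longrightarrow> lt y z \<Longrightarrow> lt x z"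
  unfolding is_tree_def by (metis (no_types))

lemma Well_order_pred_order: "is_tree A lt \<Longrightarrow> x \<in> A \<Longrightarrow> Well_order (pred_order A lt x)"
  unfolding is_tree_def by blast

lemma Field_pred_order: "Field (pred_order A lt x) = tree_pred A lt x"
  unfolding pred_order_def Field_def by auto

lemma tree_pred_comparable:
  assumes T: "is_tree A lt" and "lt a x" "lt b x"
  shows "a = b \<or> lt a b \<or> lt b a"
proof -
  have "Well_order (pred_order A lt x)"
    using Well_order_pred_order[OF T] tree_lt_memD[OF T \<open>lt a x\<close>] by blast
  moreover have "a \<in> Field (pred_order A lt x)" "b \<in> Field (pred_order A lt x)"
    using assms tree_lt_memD[OF T] by (auto simp: Field_pred_order tree_pred_def)
  ultimately have "a = b \<or> (a, b) \<in> pred_order A lt x \<or> (b, a) \<in> pred_order A lt x"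
    unfolding well_order_on_def linear_order_on_def total_on_def by blast
  then show ?thesis unfolding pred_order_def by auto
qed

lemma tree_minimalE:
  assumes T: "is_tree A lt" and "q \<in> Q"
  obtains m where "m \<in> Q" "\<And>w. lt w m \<Longrightarrow> w \<notin> Q"
proof (cases "\<exists>w\<in>Q. lt w q")
  case False
  then show ?thesis using that \<open>q \<in> Q\<close> by blast
next
  case True
  then obtain w where w: "w \<in> Q \<inter> tree_pred A lt q"
    using tree_lt_memD[OF T] unfolding tree_pred_def by blast
  have "Well_order (pred_order A lt q)"
    using Well_order_pred_order[OF T] tree_lt_memD[OF T] w unfolding tree_pred_def by blast
  then have "wf (pred_order A lt q - Id)"
    unfolding well_order_on_def by blast
  then obtain m where m: "m \<in> Q \<inter> tree_pred A lt q"
    and min: "\<And>w. (w, m) \<in> pred_order A lt q - Id \<Longrightarrow> w \<notin> Q \<inter> tree_pred A lt q"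
    using wfE_min[OF _ w] by blast
  have "w \<notin> Q" if "lt w m" for w
    using min[of w] m that tree_trans[OF T] tree_irrefl[OF T] tree_lt_memD[OF T]
    unfolding pred_order_def tree_pred_def by blast
  then show ?thesis using that m by blast
qed

section \<open>The interval topology\<close>

definition tree_itv :: "'a set \<Rightarrow> ('a \<Rightarrow> 'a \<Rightarrow> bool) \<Rightarrow> 'a \<Rightarrow> 'a \<Rightarrow> 'a set" where
  "tree_itv A lt t s = {z \<in> A. lt t z \<and> (z = s \<or> lt z s)}"

lemma tree_itv_Int:
  assumes T: "is_tree A lt" and "lt t1 s" "lt t2 s"
  obtains t where "lt t s" "tree_itv A lt t s \<subseteq> tree_itv A lt t1 s \<inter> tree_itv A lt t2 s"
  using tree_pred_comparable[OF T \<open>lt t1 s\<close> \<open>lt t2 s\<close>] assms tree_trans[OF T]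
  unfolding tree_itv_def by blast

lemma openin_tree_topology_if_nbhds:
  assumes T: "is_tree A lt"
    and U: "U \<subseteq> A \<and> (\<forall>s\<in>U. (\<exists>t. lt t s) \<longrightarrow> (\<exists>t. lt t s \<and> tree_itv A lt t s \<subseteq> U))"
  shows "openin (tree_topology A lt) U"
proof -
  have "U = \<Union>{b \<in> tree_base A lt. b \<subseteq> U}"
  proof (intro equalityI subsetI)
    fix s assume s: "s \<in> U"
    show "s \<in> \<Union>{b \<in> tree_base A lt. b \<subseteq> U}"
    proof (cases "\<exists>t. lt t s")
      case True
      then obtain t where "lt t s" "tree_itv A lt t s \<subseteq> U" using U s by blast
      moreover have "tree_itv A lt t s \<in> tree_base A lt"
        using tree_lt_memD[OF T \<open>lt t s\<close>] \<open>lt t s\<close> unfolding tree_base_def tree_itv_def by blast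
      ultimately show ?thesis using tree_lt_memD[OF T] unfolding tree_itv_def by blast
    next
      case False
      then have "{s} \<in> tree_base A lt" using U s unfolding tree_base_def by blast
      then show ?thesis using s by blast
    qed
  qed blast
  also have "generate_topology_on (tree_base A lt) \<dots>"
    by (rule generate_topology_on.UN) (simp add: generate_topology_on.Basis)
  finally show ?thesis
    by (simp add: tree_topology_def openin_topology_generated_by_iff)
qed

lemma openin_tree_topology:
  assumes T: "is_tree A lt"
  shows "openin (tree_topology A lt) U \<longleftrightarrow>
    U \<subseteq> A \<and> (\<forall>s\<in>U. (\<exists>t. lt t s) \<longrightarrow> (\<exists>t. lt t s \<and> tree_itv A lt t s \<subseteq> U))"
    (is "_ \<longleftrightarrow> ?nbhds U")
proof
  assume "openin (tree_topology A lt) U"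
  then have "generate_topology_on (tree_base A lt) U"
    by (simp add: tree_topology_def openin_topology_generated_by_iff)
  then show "?nbhds U"
  proof induct
    case (Int a b)
    show ?case
    proof (intro conjI ballI impI)
      fix s assume "s \<in> a \<inter> b" "\<exists>t. lt t s"
      then obtain t1 t2 where "lt t1 s" "tree_itv A lt t1 s \<subseteq> a" "lt t2 s" "tree_itv A lt t2 s \<subseteq> b"
        using Int by blast
      moreover obtain t where "lt t s" "tree_itv A lt t s \<subseteq> tree_itv A lt t1 s \<inter> tree_itv A lt t2 s"
        using tree_itv_Int[OF T \<open>lt t1 s\<close> \<open>lt t2 s\<close>] .
      ultimately show "\<exists>t. lt t s \<and> tree_itv A lt t s \<subseteq> a \<inter> b"
        by blast
    qed (use Int in blast)
  next
    case (Basis b)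
    then consider x y where "lt x y" "b = tree_itv A lt x y"
      | x where "x \<in> A" "\<forall>y\<in>A. \<not> lt y x" "b = {x}"
      unfolding tree_base_def tree_itv_def by blast
    then show ?case
    proof cases
      case 1
      then show ?thesis unfolding tree_itv_def using tree_trans[OF T] by blast
    next
      case 2
      then show ?thesis using tree_lt_memD[OF T] by blast
    qed
  qed blast+
qed (rule openin_tree_topology_if_nbhds[OF T])

lemma topspace_tree_topology:
  assumes T: "is_tree A lt" shows "topspace (tree_topology A lt) = A"
proof -
  have "openin (tree_topology A lt) A"
    using tree_lt_memD[OF T] by (auto simp: openin_tree_topology[OF T] tree_itv_def)
  then have "A \<subseteq> topspace (tree_topology A lt)"
    by (rule openin_subset)
  moreover have "topspace (tree_topology A lt) \<subseteq> A"
    using openin_tree_topology[OF T, of "topspace (tree_topology A lt)"] by simp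
  ultimately show ?thesis by blast
qed

lemma continuous_map_tree_topology_iff:
  assumes T: "is_tree A lt"
  shows "continuous_map (tree_topology A lt) Y g \<longleftrightarrow> g \<in> A \<rightarrow> topspace Y \<and>
    (\<forall>s t0 V. openin Y V \<and> g s \<in> V \<and> lt t0 s \<longrightarrow> (\<exists>t. lt t s \<and> g ` tree_itv A lt t s \<subseteq> V))"
    (is "_ \<longleftrightarrow> _ \<and> (\<forall>s t0 V. ?local s t0 V)")
proof -
  have "openin (tree_topology A lt) {x \<in> A. g x \<in> V} \<longleftrightarrow> (\<forall>s t0. ?local s t0 V)"
    if V: "openin Y V" for V
  proof
    assume "openin (tree_topology A lt) {x \<in> A. g x \<in> V}"
    then show "\<forall>s t0. ?local s t0 V"
      unfolding openin_tree_topology[OF T] using tree_lt_memD[OF T] by (fastforce simp: image_subset_iff)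
  next
    assume "\<forall>s t0. ?local s t0 V"
    then show "openin (tree_topology A lt) {x \<in> A. g x \<in> V}"
      unfolding openin_tree_topology[OF T] using V
      by (auto simp: image_subset_iff tree_itv_def) blast
  qed
  then show ?thesis
    by (auto simp: continuous_map_def topspace_tree_topology[OF T]) blast
qed

lemma underS_pred_order:
  assumes T: "is_tree A lt" and "lt a x"
  shows "underS (pred_order A lt x) a = tree_pred A lt a"
  using assms tree_lt_memD[OF T] tree_trans[OF T] tree_irrefl[OF T]
  unfolding underS_def pred_order_def tree_pred_def by blast

lemma Restr_pred_order_underS:
  assumes T: "is_tree A lt" and "lt a x"
  shows "Restr (pred_order A lt x) (underS (pred_order A lt x) a) = pred_order A lt a"
  unfolding underS_pred_order[OF assms]
  unfolding pred_order_def tree_pred_def using assms tree_trans[OF T] by blast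

lemma pred_order_ordLess:
  assumes T: "is_tree A lt" and "lt a x"
  shows "(pred_order A lt a, pred_order A lt x) \<in> ordLess"
proof -
  have "a \<in> Field (pred_order A lt x)"
    using assms tree_lt_memD[OF T] by (auto simp: Field_pred_order tree_pred_def)
  moreover have "(pred_order A lt a, Restr (pred_order A lt x) (underS (pred_order A lt x) a)) \<in> ordIso"
    unfolding Restr_pred_order_underS[OF assms]
    using ordIso_reflexive Well_order_pred_order[OF T] tree_lt_memD[OF assms] by blast
  ultimately show ?thesis
    using ordLess_iff_ordIso_Restr Well_order_pred_order[OF T] tree_lt_memD[OF assms] by blast
qed

lemma ordLess_pred_orderE:
  assumes T: "is_tree A lt" and "x \<in> A" "Well_order r" "(r, pred_order A lt x) \<in> ordLess"
  obtains a where "lt a x" "(r, pred_order A lt a) \<in> ordIso"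
proof -
  obtain a where a: "a \<in> Field (pred_order A lt x)"
    and "(r, Restr (pred_order A lt x) (underS (pred_order A lt x) a)) \<in> ordIso"
    using assms ordLess_iff_ordIso_Restr Well_order_pred_order[OF T] by blast
  moreover have "lt a x" using a by (simp add: Field_pred_order tree_pred_def)
  ultimately show ?thesis using that Restr_pred_order_underS[OF T] by metis
qed

lemma tree_antichain_same_height:
  assumes T: "is_tree A lt"
  shows "tree_antichain A lt {x \<in> A. (pred_order A lt x, r) \<in> ordIso}"
  unfolding tree_antichain_def
proof (intro conjI ballI impI)
  fix x w assume "x \<in> {x \<in> A. (pred_order A lt x, r) \<in> ordIso}" "w \<in> {x \<in> A. (pred_order A lt x, r) \<in> ordIso}"
  then have "(pred_order A lt x, pred_order A lt w) \<in> ordIso" "(pred_order A lt w, pred_order A lt x) \<in> ordIso"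
    using ordIso_symmetric ordIso_transitive by blast+
  then show "\<not> lt x w" "\<not> lt w x"
    using pred_order_ordLess[OF T] not_ordLess_ordIso by blast+
qed blast

lemma tree_realizes_countable_heights:
  assumes T: "is_tree A lt"
    and AC: "\<forall>C. tree_antichain A lt C \<longrightarrow> countable C"
    and "uncountable A" and r: "Well_order (r :: nat rel)"
  shows "\<exists>x\<in>A. (pred_order A lt x, r) \<in> ordIso"
proof (rule ccontr)
  assume none: "\<not> (\<exists>x\<in>A. (pred_order A lt x, r) \<in> ordIso)"
  \<comment> \<open>Then all heights lie below r, and the nodes fall into countably many levels, each an antichain.\<close>
  define level where "level n = {x \<in> A. (pred_order A lt x, Restr r (underS r n)) \<in> ordIso}" for n
  have "A \<subseteq> (\<Union>n\<in>Field r. level n)"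
  proof
    fix x assume x: "x \<in> A"
    have "(r, pred_order A lt x) \<notin> ordLess"
      using ordLess_pred_orderE[OF T x r] none tree_lt_memD[OF T] ordIso_symmetric by metis
    moreover have "(r, pred_order A lt x) \<notin> ordIso"
      using none x ordIso_symmetric by blast
    ultimately have "(pred_order A lt x, r) \<in> ordLess"
      using ordLess_or_ordLeq[OF Well_order_pred_order[OF T x] r] ordLeq_iff_ordLess_or_ordIso by blast
    then show "x \<in> (\<Union>n\<in>Field r. level n)"
      using ordLess_iff_ordIso_Restr[OF r Well_order_pred_order[OF T x]] x unfolding level_def by blast
  qed
  moreover have "countable (\<Union>n\<in>Field r. level n)"
    using AC tree_antichain_same_height[OF T] unfolding level_def by (intro countable_UN) blast+
  ultimately show False using \<open>uncountable A\<close> countable_subset by blast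
qed

section \<open>Downward closed subtrees\<close>

definition subtree_lt :: "'a set \<Rightarrow> ('a \<Rightarrow> 'a \<Rightarrow> bool) \<Rightarrow> 'a \<Rightarrow> 'a \<Rightarrow> bool" where
  "subtree_lt D lt a b \<longleftrightarrow> lt a b \<and> a \<in> D \<and> b \<in> D"

context
  fixes A :: "'a set" and lt :: "'a \<Rightarrow> 'a \<Rightarrow> bool" and D :: "'a set"
  assumes T: "is_tree A lt" and D: "D \<subseteq> A" and down: "\<And>x t. x \<in> D \<Longrightarrow> lt t x \<Longrightarrow> t \<in> D"
begin

lemma subtree_lt_iff: "x \<in> D \<Longrightarrow> subtree_lt D lt t x \<longleftrightarrow> lt t x"
  using down by (auto simp: subtree_lt_def)

lemma tree_pred_subtree: "x \<in> D \<Longrightarrow> tree_pred D (subtree_lt D lt) x = tree_pred A lt x"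
  using D down by (auto simp: tree_pred_def subtree_lt_def)

lemma pred_order_subtree: "x \<in> D \<Longrightarrow> pred_order D (subtree_lt D lt) x = pred_order A lt x"
  using D down tree_trans[OF T] by (auto simp: pred_order_def tree_pred_def subtree_lt_def)

lemma tree_itv_subtree: "s \<in> D \<Longrightarrow> lt t s \<Longrightarrow> tree_itv D (subtree_lt D lt) t s = tree_itv A lt t s"
  using D down by (auto simp: tree_itv_def subtree_lt_def)

lemma is_tree_subtree: "is_tree D (subtree_lt D lt)"
  unfolding is_tree_def
proof (intro conjI)
  show "\<forall>x\<in>D. Well_order (pred_order D (subtree_lt D lt) x)"
    using Well_order_pred_order[OF T] D by (auto simp: pred_order_subtree)
  show "\<forall>x\<in>D. \<forall>y\<in>D. tree_pred D (subtree_lt D lt) x = tree_pred D (subtree_lt D lt) y \<and>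
      tree_pred D (subtree_lt D lt) x \<noteq> {} \<and>
      \<not> (\<exists>m\<in>tree_pred D (subtree_lt D lt) x. \<forall>z\<in>tree_pred D (subtree_lt D lt) x.
        z = m \<or> subtree_lt D lt z m) \<longrightarrow> x = y"
  proof (intro ballI impI)
    fix x y assume xy: "x \<in> D" "y \<in> D" and limit:
      "tree_pred D (subtree_lt D lt) x = tree_pred D (subtree_lt D lt) y \<and>
      tree_pred D (subtree_lt D lt) x \<noteq> {} \<and>
      \<not> (\<exists>m\<in>tree_pred D (subtree_lt D lt) x. \<forall>z\<in>tree_pred D (subtree_lt D lt) x.
        z = m \<or> subtree_lt D lt z m)"
    have "subtree_lt D lt z m \<longleftrightarrow> lt z m" if "m \<in> tree_pred A lt x" for z m
      using that xy down by (intro subtree_lt_iff) (auto simp: tree_pred_def)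
    then have "tree_pred A lt x = tree_pred A lt y \<and> tree_pred A lt x \<noteq> {} \<and>
        \<not> (\<exists>m\<in>tree_pred A lt x. \<forall>z\<in>tree_pred A lt x. z = m \<or> lt z m)"
      using limit unfolding tree_pred_subtree[OF xy(1)] tree_pred_subtree[OF xy(2)] by metis
    then show "x = y"
      using T xy D unfolding is_tree_def by blast
  qed
qed (use tree_irrefl[OF T] tree_trans[OF T] in \<open>auto simp: subtree_lt_def\<close>)

lemma tree_topology_subtree: "tree_topology D (subtree_lt D lt) = subtopology (tree_topology A lt) D"
  unfolding topology_eq
proof (intro allI iffI)
  fix U assume U: "openin (tree_topology D (subtree_lt D lt)) U"
  have "openin (tree_topology A lt) U"
    unfolding openin_tree_topology[OF T]
  proof (intro conjI ballI impI)
    show "U \<subseteq> A" using U D openin_tree_topology[OF is_tree_subtree] by blast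
    fix s assume s: "s \<in> U" and "\<exists>t. lt t s"
    moreover have "s \<in> D" using U s by (simp add: openin_tree_topology[OF is_tree_subtree] subset_iff)
    ultimately obtain t where "subtree_lt D lt t s" "tree_itv D (subtree_lt D lt) t s \<subseteq> U"
      using U by (auto simp: openin_tree_topology[OF is_tree_subtree] subtree_lt_iff)
    then show "\<exists>t. lt t s \<and> tree_itv A lt t s \<subseteq> U"
      using \<open>s \<in> D\<close> by (auto simp: subtree_lt_iff tree_itv_subtree)
  qed
  moreover have "U \<subseteq> D" using U by (simp add: openin_tree_topology[OF is_tree_subtree])
  ultimately show "openin (subtopology (tree_topology A lt) D) U"
    by (metis inf.absorb_iff1 openin_subtopology)
next
  fix U assume "openin (subtopology (tree_topology A lt) D) U"
  then obtain V where V: "openin (tree_topology A lt) V" "U = V \<inter> D"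
    by (auto simp: openin_subtopology)
  show "openin (tree_topology D (subtree_lt D lt)) U"
    unfolding openin_tree_topology[OF is_tree_subtree]
  proof (intro conjI ballI impI)
    fix s assume s: "s \<in> U" and "\<exists>t. subtree_lt D lt t s"
    then obtain t where t: "lt t s" "tree_itv A lt t s \<subseteq> V"
      using V by (auto simp: openin_tree_topology[OF T] subtree_lt_def)
    then have "subtree_lt D lt t s" "tree_itv D (subtree_lt D lt) t s \<subseteq> U"
      using s V(2) down by (auto simp: subtree_lt_iff tree_itv_subtree, auto simp: tree_itv_def)
    then show "\<exists>t. subtree_lt D lt t s \<and> tree_itv D (subtree_lt D lt) t s \<subseteq> U" by blast
  qed (use V in blast)
qed

lemma suslin_tree_subtree:
  assumes S: "suslin_tree A lt" and "uncountable D"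
  shows "suslin_tree D (subtree_lt D lt)"
proof -
  have "tree_chain D (subtree_lt D lt) C \<Longrightarrow> tree_chain A lt C" for C
    using D by (auto simp: tree_chain_def subtree_lt_def)
  moreover have "tree_antichain D (subtree_lt D lt) C \<Longrightarrow> tree_antichain A lt C" for C
    unfolding tree_antichain_def subtree_lt_def using D by (metis subsetD subset_trans)
  moreover have "\<forall>x\<in>D. countable (tree_pred D (subtree_lt D lt) x)"
    using S D by (auto simp: suslin_tree_def height_omega1_def tree_pred_subtree)
  ultimately show ?thesis
    using S is_tree_subtree tree_realizes_countable_heights[OF is_tree_subtree _ \<open>uncountable D\<close>]
    by (simp add: suslin_tree_def height_omega1_def)
qed

end

section \<open>Fibres of continuous maps\<close>

lemma countable_if_finite_pred:
  assumes T: "is_tree A lt" and AC: "\<forall>C. tree_antichain A lt C \<longrightarrow> countable C"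
    and "S \<subseteq> A" and fin: "\<And>x. x \<in> A \<Longrightarrow> finite (S \<inter> tree_pred A lt x)"
  shows "countable S"
proof -
  define level where "level k = {z \<in> S. card (S \<inter> tree_pred A lt z) = k}" for k
  have "tree_antichain A lt (level k)" for k
    unfolding tree_antichain_def
  proof (intro conjI ballI impI)
    have "card (S \<inter> tree_pred A lt z) < card (S \<inter> tree_pred A lt w)"
      if "z \<in> level k" "w \<in> level k" "lt z w" for z w
    proof (rule psubset_card_mono)
      show "finite (S \<inter> tree_pred A lt w)" using fin tree_lt_memD[OF T \<open>lt z w\<close>] by blast
      show "S \<inter> tree_pred A lt z \<subset> S \<inter> tree_pred A lt w"
        using that tree_trans[OF T] tree_irrefl[OF T] tree_lt_memD[OF T]
        unfolding level_def tree_pred_def by blast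
    qed
    then show "\<not> lt z w" "\<not> lt w z" if "z \<in> level k" "w \<in> level k" "z \<noteq> w" for z w
      using that unfolding level_def by fastforce+
  qed (use \<open>S \<subseteq> A\<close> in \<open>auto simp: level_def\<close>)
  then have "countable (\<Union>k. level k)" using AC by blast
  moreover have "S \<subseteq> (\<Union>k. level k)" unfolding level_def by blast
  ultimately show ?thesis using countable_subset by blast
qed

lemma finite_pred_if_locally_finite:
  assumes T: "is_tree A lt"
    and local: "\<And>s t0. lt t0 s \<Longrightarrow> \<exists>t. lt t s \<and> finite {z \<in> S. lt t z \<and> lt z s}"
  shows "finite (S \<inter> tree_pred A lt x)"
proof (rule ccontr)
  assume "infinite (S \<inter> tree_pred A lt x)"
  then have "x \<in> {x. infinite (S \<inter> tree_pred A lt x)}" by simp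
  then obtain s where "s \<in> {x. infinite (S \<inter> tree_pred A lt x)}"
    and "\<And>w. lt w s \<Longrightarrow> w \<notin> {x. infinite (S \<inter> tree_pred A lt x)}"
    by (rule tree_minimalE[OF T]) blast
  then have s: "infinite (S \<inter> tree_pred A lt s)"
    and below: "\<And>w. lt w s \<Longrightarrow> finite (S \<inter> tree_pred A lt w)" by auto
  then obtain t0 where "lt t0 s"
    by (metis finite.emptyI inf_bot_right tree_pred_def ex_in_conv mem_Collect_eq)
  then obtain t where t: "lt t s" "finite {z \<in> S. lt t z \<and> lt z s}" using local by blast
  have "S \<inter> tree_pred A lt s \<subseteq> (S \<inter> tree_pred A lt t) \<union> {t} \<union> {z \<in> S. lt t z \<and> lt z s}"
    using tree_pred_comparable[OF T _ \<open>lt t s\<close>] tree_lt_memD[OF T] unfolding tree_pred_def by blast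
  then show False using s below[OF \<open>lt t s\<close>] t(2) finite_subset by blast
qed

definition first_exits :: "'a set \<Rightarrow> ('a \<Rightarrow> 'a \<Rightarrow> bool) \<Rightarrow> ('a \<Rightarrow> 'b) \<Rightarrow> 'b \<Rightarrow> 'b set \<Rightarrow> 'a set" where
  "first_exits A lt f y V =
     {z \<in> A. f z \<notin> V \<and> (\<exists>u. lt u z \<and> f u = y \<and> (\<forall>w. lt u w \<longrightarrow> lt w z \<longrightarrow> f w \<in> V))}"

lemma first_exits_between:
  assumes T: "is_tree A lt" and "y \<in> V"
    and z: "z \<in> first_exits A lt f y V" "z' \<in> first_exits A lt f y V" "lt z z'"
  shows "\<exists>u. lt z u \<and> lt u z' \<and> f u = y"
proof -
  obtain u where u: "lt u z'" "f u = y" "\<forall>w. lt u w \<longrightarrow> lt w z' \<longrightarrow> f w \<in> V"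
    using z(2) unfolding first_exits_def by blast
  have "f z \<notin> V" using z(1) unfolding first_exits_def by blast
  then have "u \<noteq> z" "\<not> lt u z" using u \<open>y \<in> V\<close> z(3) by auto
  then show ?thesis using tree_pred_comparable[OF T \<open>lt u z'\<close> \<open>lt z z'\<close>] u by blast
qed

lemma finite_first_exits_avoiding:
  assumes T: "is_tree A lt" and "y \<in> V" and avoid: "y \<notin> f ` tree_itv A lt t s"
  shows "finite {z \<in> first_exits A lt f y V. lt t z \<and> lt z s}" (is "finite ?between")
proof (cases "?between = {}")
  case False
  then obtain z where z: "z \<in> ?between" by blast
  have "z' = z" if z': "z' \<in> ?between" for z'
  proof (rule ccontr)
    assume "z' \<noteq> z"
    then have "lt z z' \<or> lt z' z" using z z' tree_pred_comparable[OF T] by blast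
    then obtain u where "f u = y" "lt z u \<and> lt u z' \<or> lt z' u \<and> lt u z"
      using z z' first_exits_between[OF T \<open>y \<in> V\<close>] by blast
    moreover have "lt t u" "lt u s"
      using calculation(2) z z' tree_trans[OF T] by auto
    ultimately show False using avoid tree_lt_memD[OF T] by (auto simp: tree_itv_def)
  qed
  then have "?between \<subseteq> {z}" by blast
  then show ?thesis by (rule finite_subset) simp
qed (simp only: finite.emptyI)

lemma first_exits_locally_finite:
  assumes T: "is_tree A lt" and f: "continuous_map (tree_topology A lt) Y f"
    and "t1_space Y" and V: "openin Y V" "y \<in> V" and "lt t0 s"
  shows "\<exists>t. lt t s \<and> finite {z \<in> first_exits A lt f y V. lt t z \<and> lt z s}"
proof -
  have local: "\<exists>t. lt t s \<and> f ` tree_itv A lt t s \<subseteq> W" if "openin Y W" "f s \<in> W" for W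
    using f that \<open>lt t0 s\<close> by (auto simp: continuous_map_tree_topology_iff[OF T])
  have "f s \<in> topspace Y"
    using f tree_lt_memD[OF T \<open>lt t0 s\<close>] by (auto simp: continuous_map_def topspace_tree_topology[OF T])
  show ?thesis
  proof (cases "f s \<in> V")
    case True
    then obtain t where "lt t s" "f ` tree_itv A lt t s \<subseteq> V" using local V by blast
    then have "{z \<in> first_exits A lt f y V. lt t z \<and> lt z s} = {}"
      by (auto simp: first_exits_def tree_itv_def)
    then show ?thesis using \<open>lt t s\<close> by (metis finite.emptyI)
  next
    case False
    have "y \<in> topspace Y" using V openin_subset by blast
    then have "closedin Y {y}" by (rule closedin_t1_singleton[OF \<open>t1_space Y\<close>])
    then have "openin Y (topspace Y - {y})" by (simp add: openin_diff)
    moreover have "f s \<in> topspace Y - {y}" using \<open>f s \<in> topspace Y\<close> False \<open>y \<in> V\<close> by blast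
    ultimately obtain t where "lt t s" "f ` tree_itv A lt t s \<subseteq> topspace Y - {y}"
      using local by blast
    then show ?thesis using finite_first_exits_avoiding[OF T \<open>y \<in> V\<close>] by blast
  qed
qed

lemma countable_first_exits:
  assumes T: "is_tree A lt" and AC: "\<forall>C. tree_antichain A lt C \<longrightarrow> countable C"
    and f: "continuous_map (tree_topology A lt) Y f" and "t1_space Y"
    and V: "openin Y V" "y \<in> V"
  shows "countable (first_exits A lt f y V)"
proof (rule countable_if_finite_pred[OF T AC])
  show "first_exits A lt f y V \<subseteq> A" by (auto simp: first_exits_def)
  show "finite (first_exits A lt f y V \<inter> tree_pred A lt x)" for x
    using finite_pred_if_locally_finite[OF T] first_exits_locally_finite[OF T f \<open>t1_space Y\<close> V]
    by blast
qed

lemma first_exit_above: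
  assumes T: "is_tree A lt" and "lt u v" "f v \<notin> V"
  shows "\<exists>z\<in>first_exits A lt f (f u) V. lt u z"
proof -
  have "v \<in> {w. lt u w \<and> (w = v \<or> lt w v) \<and> f w \<notin> V}" using assms by simp
  then obtain z where z: "lt u z" "z = v \<or> lt z v" "f z \<notin> V"
    and min: "\<And>w. lt w z \<Longrightarrow> \<not> (lt u w \<and> (w = v \<or> lt w v) \<and> f w \<notin> V)"
    by (rule tree_minimalE[OF T]) blast
  have "\<forall>w. lt u w \<longrightarrow> lt w z \<longrightarrow> f w \<in> V"
    using min z(2) tree_trans[OF T] by blast
  then show ?thesis using z tree_lt_memD[OF T] unfolding first_exits_def by blast
qed

lemma countable_nonconstant_fibre:
  assumes T: "is_tree A lt" and AC: "\<forall>C. tree_antichain A lt C \<longrightarrow> countable C"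
    and PC: "\<forall>x\<in>A. countable (tree_pred A lt x)"
    and f: "continuous_map (tree_topology A lt) Y f" and "t1_space Y" and "gdelta_in Y {y}"
  shows "countable {u \<in> A. f u = y \<and> (\<exists>v. lt u v \<and> f v \<noteq> y)}"
proof -
  obtain \<U> where \<U>: "countable \<U>" "\<And>V. V \<in> \<U> \<Longrightarrow> openin Y V" "\<Inter>\<U> = {y}"
    using \<open>gdelta_in Y {y}\<close> unfolding gdelta_in_alt intersection_of_def by blast
  have "{u \<in> A. f u = y \<and> (\<exists>v. lt u v \<and> f v \<noteq> y)} \<subseteq>
      (\<Union>V\<in>\<U>. \<Union>z\<in>first_exits A lt f y V. tree_pred A lt z)"
  proof
    fix u assume "u \<in> {u \<in> A. f u = y \<and> (\<exists>v. lt u v \<and> f v \<noteq> y)}"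
    then obtain v where "u \<in> A" "f u = y" "lt u v" "f v \<noteq> y" by blast
    moreover obtain V where "V \<in> \<U>" "f v \<notin> V" using \<U>(3) \<open>f v \<noteq> y\<close> by blast
    ultimately show "u \<in> (\<Union>V\<in>\<U>. \<Union>z\<in>first_exits A lt f y V. tree_pred A lt z)"
      using first_exit_above[OF T, of u v f V] unfolding tree_pred_def by blast
  qed
  moreover have "countable (\<Union>V\<in>\<U>. \<Union>z\<in>first_exits A lt f y V. tree_pred A lt z)"
  proof (intro countable_UN[OF \<U>(1)] countable_UN)
    fix V assume "V \<in> \<U>"
    then show "countable (first_exits A lt f y V)"
      using countable_first_exits[OF T AC f \<open>t1_space Y\<close> \<U>(2)] \<U>(3) by blast
  next
    fix V z assume "z \<in> first_exits A lt f y V"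
    then show "countable (tree_pred A lt z)" using PC by (simp add: first_exits_def)
  qed
  ultimately show ?thesis by (rule countable_subset)
qed

lemma countable_nonconstant_points:
  fixes Y :: "'b topology" and A :: "'a set" and f :: "'a \<Rightarrow> 'b"
  assumes "t1_space Y" and gd: "\<forall>y\<in>topspace Y. gdelta_in Y {y}"
    and fibre: "\<forall>(B :: 'a set) ltB (g :: 'a \<Rightarrow> 'b). suslin_tree B ltB \<and>
           continuous_map (tree_topology B ltB) Y g \<longrightarrow>
           (\<exists>y\<in>topspace Y. uncountable {x \<in> B. g x = y})"
    and S: "suslin_tree A lt" and f: "continuous_map (tree_topology A lt) Y f"
  shows "countable {x \<in> A. \<exists>v. lt x v \<and> f v \<noteq> f x}"
proof (rule ccontr)
  define D where "D = {x \<in> A. \<exists>v. lt x v \<and> f v \<noteq> f x}"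
  have T: "is_tree A lt" and AC: "\<forall>C. tree_antichain A lt C \<longrightarrow> countable C"
    and PC: "\<forall>x\<in>A. countable (tree_pred A lt x)"
    using S by (simp_all add: suslin_tree_def height_omega1_def)
  have down: "t \<in> D" if "x \<in> D" "lt t x" for x t
  proof -
    obtain v where "lt x v" "f v \<noteq> f x" using \<open>x \<in> D\<close> unfolding D_def by blast
    moreover have "t \<in> A" "lt t v" using tree_lt_memD[OF T] tree_trans[OF T] \<open>lt t x\<close> \<open>lt x v\<close> by blast+
    ultimately show "t \<in> D" using \<open>lt t x\<close> unfolding D_def by (cases "f v = f t") auto
  qed
  have "D \<subseteq> A" by (simp add: D_def)
  assume "uncountable {x \<in> A. \<exists>v. lt x v \<and> f v \<noteq> f x}"
  then have "uncountable D" by (simp add: D_def)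
  have "tree_topology D (subtree_lt D lt) = subtopology (tree_topology A lt) D"
    by (rule tree_topology_subtree[OF T \<open>D \<subseteq> A\<close>]) (use down in blast)
  then have "continuous_map (tree_topology D (subtree_lt D lt)) Y f"
    using f by (simp add: continuous_map_from_subtopology)
  moreover have "suslin_tree D (subtree_lt D lt)"
    by (rule suslin_tree_subtree[OF T \<open>D \<subseteq> A\<close> _ S \<open>uncountable D\<close>]) (use down in blast)
  ultimately obtain y where "y \<in> topspace Y" "uncountable {x \<in> D. f x = y}"
    using fibre by blast
  moreover have "{x \<in> D. f x = y} \<subseteq> {u \<in> A. f u = y \<and> (\<exists>v. lt u v \<and> f v \<noteq> y)}"
    unfolding D_def by blast
  ultimately show False
    using countable_nonconstant_fibre[OF T AC PC f \<open>t1_space Y\<close>] gd countable_subset by blast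
qed

section \<open>Retractions\<close>

lemma tree_ex1_minimal_below:
  assumes T: "is_tree A lt" and "x \<in> C"
  shows "\<exists>!m. m \<in> {m \<in> C. \<forall>t. lt t m \<longrightarrow> t \<notin> C} \<and> (m = x \<or> lt m x)"
proof -
  have "x \<in> {w \<in> C. w = x \<or> lt w x}" using \<open>x \<in> C\<close> by simp
  then obtain m where "m \<in> C" "m = x \<or> lt m x" and "\<And>w. lt w m \<Longrightarrow> w \<notin> {w \<in> C. w = x \<or> lt w x}"
    by (rule tree_minimalE[OF T]) blast
  then have "m \<in> {m \<in> C. \<forall>t. lt t m \<longrightarrow> t \<notin> C} \<and> (m = x \<or> lt m x)"
    using tree_trans[OF T] by blast
  moreover have "m' = m" if "m' \<in> {m \<in> C. \<forall>t. lt t m \<longrightarrow> t \<notin> C} \<and> (m' = x \<or> lt m' x)" for m'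
    using that calculation tree_pred_comparable[OF T, of m x m'] by blast
  ultimately show ?thesis by blast
qed

lemma tree_retraction_to_minimal:
  assumes T: "is_tree A lt" and "C \<subseteq> A" and up: "\<And>x w. x \<in> C \<Longrightarrow> lt x w \<Longrightarrow> w \<in> C"
  defines "M \<equiv> {m \<in> C. \<forall>t. lt t m \<longrightarrow> t \<notin> C}"
  obtains r where "continuous_map (tree_topology A lt) (subtopology (tree_topology A lt) (A - C \<union> M)) r"
    and "\<And>x. x \<in> A - C \<union> M \<Longrightarrow> r x = x"
    and "\<And>x. x \<in> C \<Longrightarrow> r x \<in> M \<and> (r x = x \<or> lt (r x) x)"
proof -
  note root_unique = tree_ex1_minimal_below[OF T, of _ C, folded M_def]
  define r where "r x = (if x \<in> C then THE m. m \<in> M \<and> (m = x \<or> lt m x) else x)" for x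
  have root: "r x \<in> M \<and> (r x = x \<or> lt (r x) x)" if "x \<in> C" for x
    using theI'[OF root_unique[OF that]] that unfolding r_def by simp
  have root_eq: "r x = m" if "x \<in> C" "m \<in> M" "m = x \<or> lt m x" for x m
    using the1_equality[OF root_unique[OF that(1)]] that unfolding r_def by simp
  have fixed: "r x = x" if "x \<in> A - C \<union> M" for x
    using that root_eq[of x x] unfolding r_def M_def by auto
  have "continuous_map (tree_topology A lt) (tree_topology A lt) r"
    unfolding continuous_map_tree_topology_iff[OF T]
  proof (intro conjI allI impI)
    have "r x \<in> A" if "x \<in> A" for x
      using root[of x] fixed[of x] \<open>C \<subseteq> A\<close> that unfolding M_def by (cases "x \<in> C") auto
    then show "r \<in> A \<rightarrow> topspace (tree_topology A lt)"
      by (simp add: topspace_tree_topology[OF T])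
    fix s t0 V assume V: "openin (tree_topology A lt) V \<and> r s \<in> V \<and> lt t0 s"
    show "\<exists>t. lt t s \<and> r ` tree_itv A lt t s \<subseteq> V"
    proof (cases "r s = s")
      case True
      then have "z \<notin> C" if "lt z s" for z
        using that up root unfolding r_def M_def by (metis (no_types, lifting) mem_Collect_eq)
      then have "r z = z" if "z \<in> tree_itv A lt t s" for t z
        using that \<open>r s = s\<close> unfolding r_def tree_itv_def by auto
      moreover obtain t where "lt t s" "tree_itv A lt t s \<subseteq> V"
        using V True by (auto simp: openin_tree_topology[OF T])
      ultimately have "r ` tree_itv A lt t s \<subseteq> V" by auto
      then show ?thesis using \<open>lt t s\<close> by blast
    next
      case False
      then have "s \<in> C" unfolding r_def by (auto split: if_splits)
      then have "lt (r s) s" using root[of s] False by blast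
      have "r s \<in> M" using root[OF \<open>s \<in> C\<close>] by blast
      then have "r z = r s" if "z \<in> tree_itv A lt (r s) s" for z
        using that up[of "r s" z] root_eq[of z "r s"] unfolding tree_itv_def M_def by blast
      then have "r ` tree_itv A lt (r s) s \<subseteq> V" using V by auto
      then show ?thesis using \<open>lt (r s) s\<close> by blast
    qed
  qed
  moreover have "r x \<in> A - C \<union> M" if "x \<in> A" for x
    using root[of x] fixed[of x] that by (cases "x \<in> C") auto
  then have "r \<in> topspace (tree_topology A lt) \<rightarrow> A - C \<union> M"
    by (simp add: topspace_tree_topology[OF T])
  ultimately show ?thesis
    using that fixed root by (simp add: continuous_map_in_subtopology)
qed

lemma countable_retract_factoring:
  assumes T: "is_tree A lt" and AC: "\<forall>C. tree_antichain A lt C \<longrightarrow> countable C"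
    and "countable {x \<in> A. \<exists>v. lt x v \<and> f v \<noteq> f x}"
  obtains Z r where "Z \<subseteq> A" "countable Z"
    "continuous_map (tree_topology A lt) (subtopology (tree_topology A lt) Z) r"
    "\<And>x. x \<in> Z \<Longrightarrow> r x = x" "\<And>x. x \<in> A \<Longrightarrow> f (r x) = f x"
proof -
  define C where "C = {x \<in> A. \<forall>v. lt x v \<longrightarrow> f v = f x}"
  define M where "M = {m \<in> C. \<forall>t. lt t m \<longrightarrow> t \<notin> C}"
  have up: "w \<in> C" if "x \<in> C" "lt x w" for x w
    using that tree_trans[OF T, of x w] tree_lt_memD[OF T \<open>lt x w\<close>] unfolding C_def by auto
  have "C \<subseteq> A" unfolding C_def by blast
  obtain r where r: "continuous_map (tree_topology A lt) (subtopology (tree_topology A lt) (A - C \<union> M)) r"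
    "\<And>x. x \<in> A - C \<union> M \<Longrightarrow> r x = x" "\<And>x. x \<in> C \<Longrightarrow> r x \<in> M \<and> (r x = x \<or> lt (r x) x)"
    by (rule tree_retraction_to_minimal[OF T \<open>C \<subseteq> A\<close>, folded M_def]) (use up in auto)
  have "A - C = {x \<in> A. \<exists>v. lt x v \<and> f v \<noteq> f x}" unfolding C_def by blast
  then have "countable (A - C)" using assms(3) by simp
  moreover have "tree_antichain A lt M"
    unfolding tree_antichain_def M_def C_def by blast
  ultimately have "countable (A - C \<union> M)" using AC by blast
  moreover have "f (r x) = f x" if "x \<in> A" for x
  proof (cases "x \<in> C")
    case True
    then have "r x \<in> C" "r x = x \<or> lt (r x) x" using r(3) unfolding M_def by auto
    then show ?thesis unfolding C_def by auto
  qed (use r(2) that in simp)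
  moreover have "A - C \<union> M \<subseteq> A" using \<open>C \<subseteq> A\<close> unfolding M_def by blast
  ultimately show ?thesis using that r(1,2) by blast
qed

theorem lemma4p8:
  fixes Y :: "'b topology" and A :: "'a set" and lt :: "'a \<Rightarrow> 'a \<Rightarrow> bool"
  assumes "Hausdorff_space Y" and "regular_space Y"
    and "\<forall>y\<in>topspace Y. gdelta_in Y {y}"
    and "\<forall>(B :: 'a set) ltB (f :: 'a \<Rightarrow> 'b). suslin_tree B ltB \<and>
           continuous_map (tree_topology B ltB) Y f \<longrightarrow>
           (\<exists>y\<in>topspace Y. uncountable {x \<in> B. f x = y})"
    and "suslin_tree A lt"
  shows "S_prop (tree_topology A lt) Y"
  unfolding S_prop_def
proof (intro allI impI)
  fix f assume f: "continuous_map (tree_topology A lt) Y f"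
  have T: "is_tree A lt" and AC: "\<forall>C. tree_antichain A lt C \<longrightarrow> countable C"
    using \<open>suslin_tree A lt\<close> by (simp_all add: suslin_tree_def)
  have "countable {x \<in> A. \<exists>v. lt x v \<and> f v \<noteq> f x}"
    using countable_nonconstant_points[OF Hausdorff_imp_t1_space assms(3-5) f] assms(1) by simp
  then obtain Z r where "Z \<subseteq> A" "countable Z"
    "continuous_map (tree_topology A lt) (subtopology (tree_topology A lt) Z) r"
    "\<And>x. x \<in> Z \<Longrightarrow> r x = x" "\<And>x. x \<in> A \<Longrightarrow> f (r x) = f x"
    by (rule countable_retract_factoring[OF T AC]) auto
  then show "\<exists>Z r. Z \<subseteq> topspace (tree_topology A lt) \<and> Lindelof_space (subtopology (tree_topology A lt) Z) \<and>
      continuous_map (tree_topology A lt) (subtopology (tree_topology A lt) Z) r \<and> (\<forall>x\<in>Z. r x = x) \<and>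
      (\<forall>x\<in>topspace (tree_topology A lt). f (r x) = f x)"
    by (metis countable_imp_Lindelof_space countable_subset inf_le2 topspace_subtopology topspace_tree_topology[OF T])
qed

end
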